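(* Let $X$ be a one- or two-sided subshift with $\mathcal L(X)=\mathcal L(\tilde X)$, and let $w=w_0w_1\dots w_n$ be a block in $\mathcal L(X)$. Then there exists a unique path $\alpha_0\to\alpha_1\to\dots\to\alpha_n$ in the HB diagram of $X$ with $\alpha_0=w_0$ and $\hat\pi(\alpha_0\alpha_1\dots\alpha_n)=w$.
   Context: Let $\mathcal A$ be a finite alphabet and $\sigma$ the shift, $(\sigma x)_i=x_{i+1}$. A one-sided subshift is a nonempty closed $\sigma$-invariant $X^+\subseteq\mathcal A^{\mathbb N}$; its natural extension is $\tilde X=\{x\in\mathcal A^{\mathbb Z}: x_px_{p+1}\dots\in X^+ \text{ for all } p\in\mathbb Z\}$. For a two-sided subshift $X\subseteq\mathcal A^{\mathbb Z}$, $X^+$ is the set of right rays $x_0x_1\dots$ of points of $X$, so $\tilde X=X$. $\mathcal L(Y)$ denotes the set of finite blocks occurring in points of $Y$. For $a_{-n}\dots a_0\in\mathcal L(\tilde X)$, $\mathrm{fol}(a_{-n}\dots a_0)=\{b_0b_1\dots\in X^+:\exists b\in\tilde X \text{ with } b_{-n}\dots b_0=a_{-n}\dots a_0\}$. A block $a_{-n}\dots a_0\in\mathcal L(\tilde X)$ with $n\ge1$ is significant if $\mathrm{fol}(a_{-n}\dots a_0)\subsetneq\mathrm{fol}(a_{-n+1}\dots a_0)$; single symbols in $\mathcal L(\tilde X)$ are also counted as significant. $\mathrm{sig}(a_{-n}\dots a_0)$ is the longest significant suffix. The HB diagram has vertex set the significant blocks of $\tilde X$ and an arrow $\alpha\to\beta$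 iff there is a symbol $b$ with $\alpha b\in\mathcal L(\tilde X)$ and $\beta=\mathrm{sig}(\alpha b)$. For a finite path $\alpha_0\to\dots\to\alpha_n$, $\hat\pi(\alpha_0\dots\alpha_n)=a_0\dots a_n$ where $a_i$ is the last symbol of $\alpha_i$. *)

theory Defs
  imports "HOL-Analysis.Analysis" "HOL-Library.Sublist"
begin

definition shift1 :: "(nat \<Rightarrow> 'a) \<Rightarrow> (nat \<Rightarrow> 'a)" where
  "shift1 x = (\<lambda>i. x (Suc i))"

definition shift2 :: "(int \<Rightarrow> 'a) \<Rightarrow> (int \<Rightarrow> 'a)" where
  "shift2 x = (\<lambda>i. x (i + 1))"

definition one_sided_subshift :: "(nat \<Rightarrow> 'a::finite) set \<Rightarrow> bool" where
  "one_sided_subshift X \<longleftrightarrow> X \<noteq> {}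
     \<and> closedin (product_topology (\<lambda>_::nat. discrete_topology (UNIV::'a set)) UNIV) X
     \<and> shift1 ` X \<subseteq> X"

definition two_sided_subshift :: "(int \<Rightarrow> 'a::finite) set \<Rightarrow> bool" where
  "two_sided_subshift X \<longleftrightarrow> X \<noteq> {}
     \<and> closedin (product_topology (\<lambda>_::int. discrete_topology (UNIV::'a set)) UNIV) X
     \<and> shift2 ` X = X"

definition nat_ext :: "(nat \<Rightarrow> 'a) set \<Rightarrow> (int \<Rightarrow> 'a) set" where
  "nat_ext Xp = {x. \<forall>p::int. (\<lambda>i::nat. x (p + int i)) \<in> Xp}"

definition rays :: "(int \<Rightarrow> 'a) set \<Rightarrow> (nat \<Rightarrow> 'a) set" where
  "rays X = (\<lambda>x. \<lambda>i::nat. x (int i)) ` X"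

definition lang1 :: "(nat \<Rightarrow> 'a) set \<Rightarrow> 'a list set" where
  "lang1 X = {w. \<exists>x\<in>X. \<exists>p::nat. w = map (\<lambda>i. x (p + i)) [0..<length w]}"

definition lang2 :: "(int \<Rightarrow> 'a) set \<Rightarrow> 'a list set" where
  "lang2 X = {w. \<exists>x\<in>X. \<exists>p::int. w = map (\<lambda>i. x (p + int i)) [0..<length w]}"

text \<open>Here Xp plays the role of X^+ and Xt the role of the natural extension.
  A block a_{-n} ... a_0 is the list w of length n+1 with w!k = a_{k-n}.\<close>

definition fol :: "(nat \<Rightarrow> 'a) set \<Rightarrow> (int \<Rightarrow> 'a) set \<Rightarrow> 'a list \<Rightarrow> (nat \<Rightarrow> 'a) set" where
  "fol Xp Xt w = {y \<in> Xp. \<exists>b\<in>Xt.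
      (\<forall>k<length w. b (int k - int (length w - 1)) = w ! k) \<and> y = (\<lambda>i. b (int i))}"

definition significant :: "(nat \<Rightarrow> 'a) set \<Rightarrow> (int \<Rightarrow> 'a) set \<Rightarrow> 'a list \<Rightarrow> bool" where
  "significant Xp Xt w \<longleftrightarrow> w \<in> lang2 Xt \<and>
     (length w = 1 \<or> (length w \<ge> 2 \<and> fol Xp Xt w \<subset> fol Xp Xt (tl w)))"

definition sig :: "(nat \<Rightarrow> 'a) set \<Rightarrow> (int \<Rightarrow> 'a) set \<Rightarrow> 'a list \<Rightarrow> 'a list" where
  "sig Xp Xt w = (THE v. suffix v w \<and> significant Xp Xt v \<and>
       (\<forall>u. suffix u w \<and> significant Xp Xt u \<longrightarrow> length u \<le> length v))"

definition hb_edge :: "(nat \<Rightarrow> 'a) set \<Rightarrow> (int \<Rightarrow> 'a) set \<Rightarrow> 'a list \<Rightarrow> 'a list \<Rightarrow> bool" where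
  "hb_edge Xp Xt \<alpha> \<beta> \<longleftrightarrow> significant Xp Xt \<alpha> \<and> significant Xp Xt \<beta> \<and>
     (\<exists>b. \<alpha> @ [b] \<in> lang2 Xt \<and> \<beta> = sig Xp Xt (\<alpha> @ [b]))"

definition hb_path :: "(nat \<Rightarrow> 'a) set \<Rightarrow> (int \<Rightarrow> 'a) set \<Rightarrow> 'a list list \<Rightarrow> bool" where
  "hb_path Xp Xt as \<longleftrightarrow> as \<noteq> [] \<and> (\<forall>i<length as. significant Xp Xt (as ! i)) \<and>
     (\<forall>i. Suc i < length as \<longrightarrow> hb_edge Xp Xt (as ! i) (as ! Suc i))"

definition pi_hat :: "'a list list \<Rightarrow> 'a list" where
  "pi_hat as = map last as"

end

theory Submission
  imports Defs
begin

text \<open>A path in the HB diagram is determined by its initial vertex and its label: an arrow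
  \<open>\<alpha> \<rightarrow> \<beta>\<close> forces \<open>\<beta> = sig (\<alpha> b)\<close> with \<open>b\<close> the last symbol of \<open>\<beta>\<close>, because the longest
  significant suffix of \<open>\<alpha> b\<close> ends in \<open>b\<close>. Conversely, starting from \<open>w\<^sub>0\<close> and following
  the arrows \<open>\<alpha> \<rightarrow> sig (\<alpha> w\<^sub>i)\<close> stays inside the language, since every vertex reached,
  followed by the part of \<open>w\<close> not yet read, is a suffix of \<open>w\<close>. Only \<open>w \<in> \<L>(X\<^sup>~)\<close>
  is needed; the subshift hypotheses serve merely to place \<open>w\<close> there.\<close>

lemma map_upt_length_eq_iff: "w = map f [0..<length w] \<longleftrightarrow> (\<forall>i<length w. w ! i = f i)"
  by (metis length_map length_upt minus_nat.diff_0 nth_equalityI nth_map_upt plus_nat.add_0)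

lemma lang2_iff_nth: "w \<in> lang2 X \<longleftrightarrow> (\<exists>x\<in>X. \<exists>p. \<forall>i<length w. w ! i = x (p + int i))"
  unfolding lang2_def by (simp add: map_upt_length_eq_iff)

lemma lang2_sublist_closed:
  assumes "u \<in> lang2 X" "sublist v u"
  shows "v \<in> lang2 X"
proof -
  obtain ps ss where u: "u = ps @ v @ ss"
    using assms(2) unfolding sublist_def by blast
  obtain x p where "x \<in> X" and x: "\<forall>i<length u. u ! i = x (p + int i)"
    using assms(1) unfolding lang2_iff_nth by blast
  have "v ! i = x ((p + int (length ps)) + int i)" if "i < length v" for i
    using x[rule_format, of "length ps + i"] that by (simp add: u nth_append add.assoc)
  then show ?thesis
    using \<open>x \<in> X\<close> unfolding lang2_iff_nth by blast
qed

lemma significant_nonempty: "significant Xp Xt v \<Longrightarrow> v \<noteq> []"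
  unfolding significant_def by auto

lemma sig_spec:
  assumes "v \<in> lang2 Xt" "v \<noteq> []"
  shows "suffix (sig Xp Xt v) v \<and> significant Xp Xt (sig Xp Xt v)"
proof -
  let ?P = "\<lambda>u. suffix u v \<and> significant Xp Xt u"
  have "suffix [last v] v"
    using assms(2) by (metis append_butlast_last_id suffixI)
  with assms(1) have last_v: "?P [last v]"
    unfolding significant_def by (auto intro: lang2_sublist_closed)
  have bounded: "\<forall>u. ?P u \<longrightarrow> length u < Suc (length v)"
    by (auto dest: suffix_length_le)
  obtain m where m: "?P m" "\<forall>u. ?P u \<longrightarrow> length u \<le> length m"
    using ex_has_greatest_nat[OF last_v bounded] by blast
  have uniq: "u = m" if u: "?P u" "\<forall>u'. ?P u' \<longrightarrow> length u' \<le> length u" for u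
  proof -
    have "length u = length m"
      using m u by (meson le_antisym)
    then have "suffix u m" "suffix m u"
      using m(1) u(1) suffix_length_suffix[of u v m] suffix_length_suffix[of m v u] by simp_all
    then show "u = m"
      by (rule suffix_order.antisym)
  qed
  have "sig Xp Xt v = m"
    unfolding sig_def by (rule the_equality) (use m uniq in blast)+
  with m show ?thesis by simp
qed

lemma last_sig:
  assumes "v \<in> lang2 Xt" "v \<noteq> []"
  shows "last (sig Xp Xt v) = last v"
proof -
  obtain zs where "v = zs @ sig Xp Xt v"
    using sig_spec[OF assms, of Xp] unfolding suffix_def by blast
  moreover have "sig Xp Xt v \<noteq> []"
    using sig_spec[OF assms, of Xp] significant_nonempty by blast
  ultimately show ?thesis
    by (metis last_appendR)
qed

lemma hb_edge_target: "hb_edge Xp Xt \<alpha> \<beta> \<Longrightarrow> \<beta> = sig Xp Xt (\<alpha> @ [last \<beta>])"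
  unfolding hb_edge_def using last_sig by fastforce

lemma hb_path_singleton [simp]: "hb_path Xp Xt [\<alpha>] \<longleftrightarrow> significant Xp Xt \<alpha>"
  unfolding hb_path_def by simp

lemma hb_path_Cons:
  assumes "as \<noteq> []"
  shows "hb_path Xp Xt (\<alpha> # as) \<longleftrightarrow> hb_edge Xp Xt \<alpha> (hd as) \<and> hb_path Xp Xt as"
proof -
  obtain \<beta> rest where "as = \<beta> # rest"
    using assms by (cases as) auto
  moreover have "hb_edge Xp Xt \<alpha> \<beta> \<Longrightarrow> significant Xp Xt \<alpha>"
    unfolding hb_edge_def by simp
  ultimately show ?thesis
    unfolding hb_path_def by (auto simp: All_less_Suc2)
qed

primrec hb_walk :: "(nat \<Rightarrow> 'a) set \<Rightarrow> (int \<Rightarrow> 'a) set \<Rightarrow> 'a list \<Rightarrow> 'a list \<Rightarrow> 'a list list" where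
  "hb_walk Xp Xt \<alpha> [] = [\<alpha>]"
| "hb_walk Xp Xt \<alpha> (b # bs) = \<alpha> # hb_walk Xp Xt (sig Xp Xt (\<alpha> @ [b])) bs"

lemma hd_hb_walk [simp]: "hd (hb_walk Xp Xt \<alpha> bs) = \<alpha>"
  by (cases bs) simp_all

lemma hb_walk_nonempty [simp]: "hb_walk Xp Xt \<alpha> bs \<noteq> []"
  by (cases bs) simp_all

lemma hb_walk_path:
  assumes "significant Xp Xt \<alpha>" "\<alpha> @ bs \<in> lang2 Xt"
  shows "hb_path Xp Xt (hb_walk Xp Xt \<alpha> bs) \<and> pi_hat (hb_walk Xp Xt \<alpha> bs) = last \<alpha> # bs"
  using assms
proof (induction bs arbitrary: \<alpha>)
  case Nil
  then show ?case by (simp add: pi_hat_def)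
next
  case (Cons b bs)
  let ?\<beta> = "sig Xp Xt (\<alpha> @ [b])"
  have "\<alpha> @ [b] \<in> lang2 Xt"
    using Cons.prems(2) by (auto intro: lang2_sublist_closed)
  then have \<beta>: "suffix ?\<beta> (\<alpha> @ [b])" "significant Xp Xt ?\<beta>" "last ?\<beta> = b"
    using sig_spec[of "\<alpha> @ [b]" Xt Xp] last_sig[of "\<alpha> @ [b]" Xt Xp] by simp_all
  have "suffix (?\<beta> @ bs) ((\<alpha> @ [b]) @ bs)"
    using \<beta>(1) by (simp only: same_suffix_suffix)
  moreover have "(\<alpha> @ [b]) @ bs \<in> lang2 Xt"
    using Cons.prems(2) by simp
  ultimately have "?\<beta> @ bs \<in> lang2 Xt"
    by (blast intro: lang2_sublist_closed)
  with \<beta>(2) have "hb_path Xp Xt (hb_walk Xp Xt ?\<beta> bs)" "pi_hat (hb_walk Xp Xt ?\<beta> bs) = b # bs"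
    using Cons.IH \<beta>(3) by auto
  moreover have "hb_edge Xp Xt \<alpha> ?\<beta>"
    unfolding hb_edge_def using Cons.prems(1) \<beta>(2) \<open>\<alpha> @ [b] \<in> lang2 Xt\<close> by blast
  ultimately show ?case
    by (simp add: hb_path_Cons pi_hat_def)
qed

lemma hb_path_eq_hb_walk:
  "hb_path Xp Xt as \<Longrightarrow> as = hb_walk Xp Xt (hd as) (tl (pi_hat as))"
proof (induction as)
  case Nil
  then show ?case by (simp add: hb_path_def)
next
  case (Cons \<alpha> as)
  show ?case
  proof (cases "as = []")
    case True
    then show ?thesis by (simp add: pi_hat_def)
  next
    case False
    with Cons.prems have edge: "hb_edge Xp Xt \<alpha> (hd as)" and path: "hb_path Xp Xt as"
      using hb_path_Cons by auto
    have walk: "hb_walk Xp Xt (hd as) (tl (pi_hat as)) = as"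
      using Cons.IH[OF path] by (rule sym)
    have "tl (pi_hat (\<alpha> # as)) = last (hd as) # tl (pi_hat as)"
      using False by (cases as) (simp_all add: pi_hat_def)
    then show ?thesis
      using hb_edge_target[OF edge] walk by simp
  qed
qed

theorem theorem5p8:
  fixes Xp :: "(nat \<Rightarrow> 'a::finite) set" and Xt :: "(int \<Rightarrow> 'a) set"
    and LX :: "'a list set" and w :: "'a list"
  assumes setting:
    "(one_sided_subshift Xp \<and> Xt = nat_ext Xp \<and> LX = lang1 Xp \<and> lang1 Xp = lang2 Xt)
     \<or> (two_sided_subshift Xt \<and> Xp = rays Xt \<and> LX = lang2 Xt)"
  assumes w: "w \<in> LX" "w \<noteq> []"
  shows "\<exists>!as. hb_path Xp Xt as \<and> length as = length w \<and> hd as = [w ! 0]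
                \<and> pi_hat as = w"
proof -
  obtain w\<^sub>0 ws where w_eq: "w = w\<^sub>0 # ws"
    using w(2) by (cases w) auto
  let ?as = "hb_walk Xp Xt [w\<^sub>0] ws"
  have "w \<in> lang2 Xt"
    using setting w(1) by auto
  then have "significant Xp Xt [w\<^sub>0]"
    unfolding significant_def w_eq by (auto intro: lang2_sublist_closed)
  with \<open>w \<in> lang2 Xt\<close> have "hb_path Xp Xt ?as" and label: "pi_hat ?as = w"
    using hb_walk_path[of Xp Xt "[w\<^sub>0]" ws] by (simp_all add: w_eq)
  moreover have "length ?as = length w"
    using arg_cong[OF label, of length] by (simp add: pi_hat_def)
  ultimately have "hb_path Xp Xt ?as \<and> length ?as = length w \<and> hd ?as = [w ! 0] \<and> pi_hat ?as = w"
    by (simp add: w_eq)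
  moreover have "bs = ?as" if "hb_path Xp Xt bs" "hd bs = [w ! 0]" "pi_hat bs = w" for bs
    using hb_path_eq_hb_walk[OF that(1)] that(2,3) by (simp add: w_eq)
  ultimately show ?thesis
    by blast
qed

end
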